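(* Let $\boldsymbol{m}=(m_1,m_2)\in\mathbb{N}^2$ and $g=\gcd(m_1,m_2)$. For every $l\in\{0,\dots,4m_1m_2/g-1\}$ and $\rho\in\{0,\dots,2g-1\}$ there exist $\boldsymbol{i}\in\mathrm{I}^{(\boldsymbol{m})}$ and $u,v\in\{-1,1\}$ with \[ i_1\equiv u\big(vl+(1-v)m_1\big)\pmod{4m_1},\qquad i_2\equiv l-2\rho-(1-v)m_2\pmod{4m_2}. \] The index $\boldsymbol{i}$ is uniquely determined by $(l,\rho)$ through these congruences, and the resulting map $(l,\rho)\mapsto\boldsymbol{i}(l,\rho)$ from $\{0,\dots,4m_1m_2/g-1\}\times\{0,\dots,2g-1\}$ to $\mathrm{I}^{(\boldsymbol{m})}$ is surjective. Moreover $\boldsymbol{i}(l,\rho)\in\mathrm{I}^{(\boldsymbol{m})}_0$ if and only if $l$ is even, and $\boldsymbol{i}(l,\rho)\in\mathrm{I}^{(\boldsymbol{m})}_1$ if and only if $l$ is odd. With the additional convention that $u=1$ if $l\equiv0\pmod{4m_1}$ and $u=-1$ if $l\equiv 2m_1\pmod{4m_1}$, the numbers $u,v$ are uniquely determined by the two congruences, and for every $\boldsymbol{i}\in\mathrm{I}^{(\boldsymbol{m})}$ \[\#\{(l,\rho):\ \boldsymbol{i}(l,\rho)=\boldsymbol{i}\}=\begin{cases}4,& 0<i_1\le m_1,\\ 2,& i_1=0.\end{cases}\]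
   Context: Nodal index set: $\mathrm{I}^{(\boldsymbol{m})}=\{(i_1,i_2)\in\mathbb{Z}^2:\ 0\le i_1\le m_1,\ -2m_2<i_2\le 2m_2,\ i_2\le0\text{ if }i_1=m_1,\ i_1+i_2\text{ even}\}$, with subsets $\mathrm{I}^{(\boldsymbol{m})}_0=\{\boldsymbol{i}\in\mathrm{I}^{(\boldsymbol{m})}: i_1,i_2\text{ even}\}$ and $\mathrm{I}^{(\boldsymbol{m})}_1=\{\boldsymbol{i}\in\mathrm{I}^{(\boldsymbol{m})}: i_1,i_2\text{ odd}\}$. *)

theory Defs
  imports "HOL-Number_Theory.Number_Theory"
begin

definition nodeI :: "nat \<Rightarrow> nat \<Rightarrow> (int \<times> int) set" where
  "nodeI m1 m2 = {(i1, i2). 0 \<le> i1 \<and> i1 \<le> int m1 \<and> - 2 * int m2 < i2 \<and> i2 \<le> 2 * int m2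
      \<and> (i1 = int m1 \<longrightarrow> i2 \<le> 0) \<and> even (i1 + i2)}"

definition nodeI0 :: "nat \<Rightarrow> nat \<Rightarrow> (int \<times> int) set" where
  "nodeI0 m1 m2 = {i \<in> nodeI m1 m2. even (fst i) \<and> even (snd i)}"

definition nodeI1 :: "nat \<Rightarrow> nat \<Rightarrow> (int \<times> int) set" where
  "nodeI1 m1 m2 = {i \<in> nodeI m1 m2. odd (fst i) \<and> odd (snd i)}"

definition paramD :: "nat \<Rightarrow> nat \<Rightarrow> (nat \<times> nat) set" where
  "paramD m1 m2 = {0..<4 * m1 * m2 div gcd m1 m2} \<times> {0..<2 * gcd m1 m2}"

definition cong_rel :: "nat \<Rightarrow> nat \<Rightarrow> nat \<Rightarrow> nat \<Rightarrow> int \<times> int \<Rightarrow> int \<Rightarrow> int \<Rightarrow> bool" where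
  "cong_rel m1 m2 l \<rho> i u v \<longleftrightarrow>
     [fst i = u * (v * int l + (1 - v) * int m1)] (mod (4 * int m1)) \<and>
     [snd i = int l - 2 * int \<rho> - (1 - v) * int m2] (mod (4 * int m2))"

definition attached :: "nat \<Rightarrow> nat \<Rightarrow> nat \<Rightarrow> nat \<Rightarrow> int \<times> int \<Rightarrow> bool" where
  "attached m1 m2 l \<rho> i \<longleftrightarrow> (\<exists>u\<in>{-1, 1}. \<exists>v\<in>{-1, 1}. cong_rel m1 m2 l \<rho> i u v)"

end

(*
  Solved for l, the first congruence reads l = u v i1 + (1 - v) m1 mod 4 m1:
  i1 in [0, m1] is the distance from l to 2 m1 Z, v = 1 or -1 according as the nearest such
  multiple is 0 or 2 m1 mod 4 m1, and u tells on which side of it l lies. The second congruence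
  makes i2 the residue of l - 2 rho - (1 - v) m2 in the window (-2 m2, 2 m2]. Residues in a window
  of length 4 m being unique, (l, rho) determines i; the remaining freedom is v when i1 = m1, which
  the condition i2 <= 0 settles, and u when i1 = 0, which the convention on l mod 4 m1 settles.
  All moduli and shifts are even, so i1, i2 and l have the same parity.

  Conversely, for a node i and signs (u, v) the congruences are a Chinese remainder problem for
  (l, rho) with moduli 4 m1 and 4 m2: rho mod 2 g is forced by compatibility of the two targets
  modulo 4 g, and then l is unique modulo lcm (4 m1) (4 m2) = 4 m1 m2 / g. So each of the four
  sign pairs yields exactly one parameter, and these are distinct except that u is irrelevant
  when i1 = 0.
*)

theory Submission
  imports Defs
begin

lemma cong_close_cases_int:
  fixes x y n :: int
  assumes "[x = y] (mod n)" and "0 < n" and "\<bar>x - y\<bar> < 2 * n"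
  shows "x = y \<or> x = y + n \<or> x = y - n"
proof -
  obtain k where k: "x - y = n * k"
    using assms(1) by (metis cong_iff_dvd_diff dvdE)
  have "\<bar>k\<bar> < 2"
    using assms(2,3) by (simp add: k abs_mult)
  then have "k = -1 \<or> k = 0 \<or> k = 1" by linarith
  then show ?thesis using k by (auto simp: algebra_simps)
qed

lemma cong_rep_in_window_int:
  fixes x a n :: int
  assumes "0 < n"
  obtains y where "[x = y] (mod n)" and "a < y" and "y \<le> a + n"
proof
  let ?y = "a + n - (a + n - x) mod n"
  have "?y = x + n * ((a + n - x) div n)"
    using div_mult_mod_eq[of "a + n - x" n] by (simp add: algebra_simps)
  then show "[x = ?y] (mod n)" unfolding cong_iff_lin by blast
  show "a < ?y" "?y \<le> a + n" using assms by (simp_all add: pos_mod_bound)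
qed

lemma cong_solvable_int:
  fixes n1 n2 a c :: int
  assumes "gcd n1 n2 dvd a - c"
  obtains x where "[x = a] (mod n1)" "[x = c] (mod n2)"
proof -
  obtain k where k: "a - c = gcd n1 n2 * k" using assms by blast
  obtain s t where st: "s*n1 + t*n2 = gcd n1 n2" using bezout_int by blast
  show ?thesis
  proof (rule that[of "a - s*n1*k"])
    have "a = (a - s*n1*k) + n1*(s*k)" by simp
    then show "[a - s*n1*k = a] (mod n1)" unfolding cong_iff_lin by blast
    have "a = c + (s*n1 + t*n2) * k" using k st by simp
    then have "c = (a - s*n1*k) + n2*(-(t*k))" by (simp add: algebra_simps)
    then show "[a - s*n1*k = c] (mod n2)" unfolding cong_iff_lin by blast
  qed
qed

lemma first_coord_cong_cases:
  fixes M a a' u v u' v' :: int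
  assumes "0 < M" and "u \<in> {-1, 1}" "v \<in> {-1, 1}" "u' \<in> {-1, 1}" "v' \<in> {-1, 1}"
    and "0 \<le> a" "a \<le> M" "0 \<le> a'" "a' \<le> M"
    and "[u*v*a + (1-v)*M = u'*v'*a' + (1-v')*M] (mod 4*M)"
  shows "a = a' \<and> (v \<noteq> v' \<longrightarrow> a = M) \<and> (v = v' \<and> u \<noteq> u' \<longrightarrow> a = 0)"
proof -
  have "\<bar>(u*v*a + (1-v)*M) - (u'*v'*a' + (1-v')*M)\<bar> < 2 * (4*M)"
    using assms(1-9) by auto
  from cong_close_cases_int[OF assms(10) _ this] show ?thesis
    using assms(1-9) by (auto simp: algebra_simps)
qed

lemma second_coord_cong_cases:
  fixes M b b' v v' :: int
  assumes "0 < M" and "v \<in> {-1, 1}" "v' \<in> {-1, 1}"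
    and "-2*M < b" "b \<le> 2*M" "-2*M < b'" "b' \<le> 2*M"
    and "[b + (1-v)*M = b' + (1-v')*M] (mod 4*M)"
  shows "(v = v' \<longrightarrow> b = b') \<and> (v \<noteq> v' \<longrightarrow> 0 < b \<or> 0 < b')"
proof -
  have "\<bar>(b + (1-v)*M) - (b' + (1-v')*M)\<bar> < 2 * (4*M)"
    using assms(1-7) by auto
  from cong_close_cases_int[OF assms(8) _ this] show ?thesis
    using assms(1-7) by (auto simp: algebra_simps)
qed

(* a is the distance from l to 2 M Z; v and u say which multiple is nearest and on which side. *)
lemma first_coord_exists:
  fixes M l :: int
  assumes "0 < M"
  obtains u v a where "u \<in> {-1, 1}" "v \<in> {-1, 1}" "0 \<le> a" "a \<le> M"
    "[l = u*v*a + (1-v)*M] (mod 4*M)"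
    "l mod (4*M) = 0 \<Longrightarrow> u = 1" "l mod (4*M) = 2*M \<Longrightarrow> u = -1"
proof -
  define r where "r = l mod (4*M)"
  have r: "0 \<le> r" "r < 4*M" using assms by (simp_all add: r_def)
  have lr: "[l = r + 4*M*k] (mod 4*M)" for k by (simp add: r_def cong_def)
  consider "r \<le> M" | "M < r" "r < 2*M" | "2*M \<le> r" "r \<le> 3*M" | "3*M < r" by linarith
  then show ?thesis
  proof cases
    case 1
    show ?thesis by (rule that[of 1 1 r]) (use 1 r lr[of 0] in \<open>auto simp: r_def\<close>)
  next
    case 2
    show ?thesis by (rule that[of 1 "-1" "2*M - r"]) (use 2 r lr[of 0] in \<open>auto simp: r_def\<close>)
  next
    case 3
    show ?thesis by (rule that[of "-1" "-1" "r - 2*M"]) (use 3 r lr[of 0] in \<open>auto simp: r_def\<close>)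
  next
    case 4
    show ?thesis by (rule that[of "-1" 1 "4*M - r"]) (use 4 r lr[of "-1"] in \<open>auto simp: r_def\<close>)
  qed
qed

(* At a = M the sign v is free, which leaves room for the constraint i2 <= 0 at i1 = m1. *)
lemma first_coord_boundary:
  fixes M u v v' :: int
  assumes "u \<in> {-1, 1}" "v \<in> {-1, 1}" "v' \<in> {-1, 1}"
  shows "[u*v*M + (1-v)*M = u*v'*M + (1-v')*M] (mod 4*M)"
proof -
  have "[- M = 3*M] (mod 4*M)" unfolding cong_iff_lin by (auto intro: exI[of _ "-1"])
  then show ?thesis using assms by (auto simp: cong_sym)
qed

lemma second_coord_exists:
  fixes M x v :: int
  assumes "0 < M"
  obtains b where "[x = b + (1-v)*M] (mod 4*M)" "-2*M < b" "b \<le> 2*M"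
proof -
  have "0 < 4*M" using assms by simp
  then obtain b where "[x - (1-v)*M = b] (mod 4*M)" "-2*M < b" "b \<le> -2*M + 4*M"
    by (rule cong_rep_in_window_int)
  then show ?thesis by (intro that[of b]) (simp_all add: cong_iff_dvd_diff algebra_simps)
qed

lemma second_coord_exists_nonpos:
  fixes M x :: int
  assumes "0 < M"
  obtains v b where "v \<in> {-1, 1}" "[x = b + (1-v)*M] (mod 4*M)" "-2*M < b" "b \<le> 0"
proof -
  obtain b where b: "[x = b + (1-1)*M] (mod 4*M)" "-2*M < b" "b \<le> 2*M"
    using assms by (rule second_coord_exists)
  show ?thesis
  proof (cases "b \<le> 0")
    case True
    then show ?thesis using b by (intro that[of 1 b]) auto
  next
    case False
    then show ?thesis using b by (intro that[of "-1" "b - 2*M"]) auto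
  qed
qed

lemma cong_rel_iff:
  assumes "u \<in> {-1, 1}" "v \<in> {-1, 1}"
  shows "cong_rel m1 m2 l \<rho> i u v \<longleftrightarrow>
    [int l = u*v*fst i + (1-v)*int m1] (mod 4*int m1) \<and>
    [int l - 2*int \<rho> = snd i + (1-v)*int m2] (mod 4*int m2)"
  using assms by (auto simp: cong_rel_def cong_iff_dvd_diff algebra_simps)

lemma cong_rel_parity:
  assumes "u \<in> {-1, 1}" "v \<in> {-1, 1}" and "cong_rel m1 m2 l \<rho> i u v"
  shows "even (int l - fst i)" and "even (int l - snd i)"
proof -
  have "[int l = u*v*fst i + (1-v)*int m1] (mod 2)"
    and "[int l - 2*int \<rho> = snd i + (1-v)*int m2] (mod 2)"
    using assms cong_dvd_modulus[of _ _ "4 * int _" 2] by (auto simp: cong_rel_iff)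
  then show "even (int l - fst i)" and "even (int l - snd i)"
    using assms(1,2) by (auto simp: cong_iff_dvd_diff)
qed

lemma attached_node_exists:
  fixes m1 m2 l \<rho> :: nat
  assumes "0 < m1" "0 < m2"
  obtains u v i where "u \<in> {-1, 1}" "v \<in> {-1, 1}" "i \<in> nodeI m1 m2"
    "cong_rel m1 m2 l \<rho> i u v"
    "l mod (4*m1) = 0 \<Longrightarrow> u = 1" "l mod (4*m1) = 2*m1 \<Longrightarrow> u = -1"
proof -
  have M: "0 < int m1" "0 < int m2" using assms by simp_all
  obtain u v0 a where u: "u \<in> {-1, 1}" and v0: "v0 \<in> {-1, 1}" and a: "0 \<le> a" "a \<le> int m1"
    and c1: "[int l = u*v0*a + (1-v0)*int m1] (mod 4*int m1)"
    and sign: "int l mod (4*int m1) = 0 \<Longrightarrow> u = 1"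
      "int l mod (4*int m1) = 2*int m1 \<Longrightarrow> u = -1"
    using first_coord_exists[OF M(1), of "int l"] by blast
  obtain v b where v: "v \<in> {-1, 1}"
    and c1': "[int l = u*v*a + (1-v)*int m1] (mod 4*int m1)"
    and c2: "[int l - 2*int \<rho> = b + (1-v)*int m2] (mod 4*int m2)"
    and b: "-2*int m2 < b" "b \<le> 2*int m2" "a = int m1 \<Longrightarrow> b \<le> 0"
  proof (cases "a = int m1")
    case True
    obtain v b where v: "v \<in> {-1, 1}" "[int l - 2*int \<rho> = b + (1-v)*int m2] (mod 4*int m2)"
      "-2*int m2 < b" "b \<le> 0"
      using M(2) by (rule second_coord_exists_nonpos)
    have "[int l = u*v*a + (1-v)*int m1] (mod 4*int m1)"
      using c1 first_coord_boundary[OF u v0 v(1), of "int m1"] True by (auto intro: cong_trans)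
    with v show ?thesis by (intro that) auto
  next
    case False
    obtain b where "[int l - 2*int \<rho> = b + (1-v0)*int m2] (mod 4*int m2)"
      "-2*int m2 < b" "b \<le> 2*int m2"
      using M(2) by (rule second_coord_exists)
    with v0 c1 False show ?thesis by (intro that) auto
  qed
  have rel: "cong_rel m1 m2 l \<rho> (a, b) u v" using c1' c2 by (simp add: cong_rel_iff[OF u v])
  have "even (a + b)"
    using cong_rel_parity[OF u v rel] by simp
  then have "(a, b) \<in> nodeI m1 m2" using a b by (auto simp: nodeI_def)
  moreover have "int (l mod (4*m1)) = int l mod (4*int m1)" by (simp add: of_nat_mod)
  ultimately show ?thesis using u v rel sign by (intro that[of u v "(a, b)"]) auto
qed

lemma ex_attached_node:
  assumes "0 < m1" "0 < m2"
  shows "\<exists>i\<in>nodeI m1 m2. attached m1 m2 l \<rho> i"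
proof -
  obtain u v i where "u \<in> {-1, 1}" "v \<in> {-1, 1}" "i \<in> nodeI m1 m2" "cong_rel m1 m2 l \<rho> i u v"
    by (rule attached_node_exists[OF assms, of l \<rho>])
  then show ?thesis unfolding attached_def by blast
qed

lemma cong_rel_node_unique:
  assumes "0 < m1" "0 < m2"
    and "u \<in> {-1, 1}" "v \<in> {-1, 1}" "u' \<in> {-1, 1}" "v' \<in> {-1, 1}"
    and "i \<in> nodeI m1 m2" "i' \<in> nodeI m1 m2"
    and "cong_rel m1 m2 l \<rho> i u v" "cong_rel m1 m2 l \<rho> i' u' v'"
  shows "i = i' \<and> v = v' \<and> (u \<noteq> u' \<longrightarrow> fst i = 0)"
proof -
  obtain i1 i2 i1' i2' where ii: "i = (i1, i2)" "i' = (i1', i2')" by fastforce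
  have r: "0 \<le> i1" "i1 \<le> int m1" "-2*int m2 < i2" "i2 \<le> 2*int m2" "i1 = int m1 \<longrightarrow> i2 \<le> 0"
    and r': "0 \<le> i1'" "i1' \<le> int m1" "-2*int m2 < i2'" "i2' \<le> 2*int m2" "i1' = int m1 \<longrightarrow> i2' \<le> 0"
    using assms(7,8) by (auto simp: ii nodeI_def)
  have "[u*v*i1 + (1-v)*int m1 = u'*v'*i1' + (1-v')*int m1] (mod 4*int m1)"
    and "[i2 + (1-v)*int m2 = i2' + (1-v')*int m2] (mod 4*int m2)"
    using assms(9,10) cong_rel_iff[OF assms(3,4)] cong_rel_iff[OF assms(5,6)]
    by (auto simp: ii intro: cong_trans cong_sym)
  with assms(1-6) r r' first_coord_cong_cases[of "int m1" u v u' v' i1 i1']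
    second_coord_cong_cases[of "int m2" v v' i2 i2']
  show ?thesis by (auto simp: ii)
qed

lemma attached_node_unique:
  assumes "0 < m1" "0 < m2" "i \<in> nodeI m1 m2" "i' \<in> nodeI m1 m2"
    and "attached m1 m2 l \<rho> i" "attached m1 m2 l \<rho> i'"
  shows "i = i'"
proof -
  obtain u v u' v' where "u \<in> {-1, 1}" "v \<in> {-1, 1}" "u' \<in> {-1, 1}" "v' \<in> {-1, 1}"
    and "cong_rel m1 m2 l \<rho> i u v" "cong_rel m1 m2 l \<rho> i' u' v'"
    using assms(5,6) unfolding attached_def by blast
  from cong_rel_node_unique[OF assms(1,2) this(1-4) assms(3,4) this(5,6)] show ?thesis by blast
qed

lemma attached_node_parity:
  assumes "i \<in> nodeI m1 m2" and "attached m1 m2 l \<rho> i"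
  shows "(i \<in> nodeI0 m1 m2 \<longleftrightarrow> even l) \<and> (i \<in> nodeI1 m1 m2 \<longleftrightarrow> odd l)"
proof -
  obtain u v where "u \<in> {-1, 1}" "v \<in> {-1, 1}" "cong_rel m1 m2 l \<rho> i u v"
    using assms(2) by (auto simp: attached_def)
  from cong_rel_parity[OF this] have "even (fst i) \<longleftrightarrow> even l" "even (snd i) \<longleftrightarrow> even l"
    by presburger+
  with assms(1) show ?thesis by (auto simp: nodeI0_def nodeI1_def)
qed

lemma first_coord_zero_mod:
  fixes m l :: nat and v :: int
  assumes "0 < m" "v \<in> {-1, 1}" and "[int l = (1-v)*int m] (mod 4*int m)"
  shows "l mod (4*m) = (if v = 1 then 0 else 2*m)"
proof -
  have "int (l mod (4*m)) = ((1-v)*int m) mod (4*int m)"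
    using assms(3) by (simp add: cong_def of_nat_mod)
  also have "\<dots> = int (if v = 1 then 0 else 2*m)" using assms(1,2) by auto
  finally show ?thesis by (simp only: of_nat_eq_iff)
qed

lemma ex1_signs:
  fixes m1 m2 l \<rho> :: nat
  assumes "0 < m1" "0 < m2"
  shows "\<exists>!uv :: int \<times> int. fst uv \<in> {-1, 1} \<and> snd uv \<in> {-1, 1}
        \<and> (l mod (4 * m1) = 0 \<longrightarrow> fst uv = 1)
        \<and> (l mod (4 * m1) = 2 * m1 \<longrightarrow> fst uv = -1)
        \<and> (\<exists>i\<in>nodeI m1 m2. cong_rel m1 m2 l \<rho> i (fst uv) (snd uv))"
    (is "\<exists>!uv. ?signs uv")
proof -
  obtain u v i where u: "u \<in> {-1, 1}" and v: "v \<in> {-1, 1}" and i: "i \<in> nodeI m1 m2"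
    and rel: "cong_rel m1 m2 l \<rho> i u v"
    and sign: "l mod (4*m1) = 0 \<Longrightarrow> u = 1" "l mod (4*m1) = 2*m1 \<Longrightarrow> u = -1"
    using attached_node_exists[OF assms] by blast
  show ?thesis
  proof (rule ex1I[of _ "(u, v)"])
    show "?signs (u, v)" using u v i rel sign by auto
  next
    fix uv assume signs': "?signs uv"
    obtain u' v' where uv: "uv = (u', v')" by fastforce
    obtain i' where u': "u' \<in> {-1, 1}" and v': "v' \<in> {-1, 1}" and i': "i' \<in> nodeI m1 m2"
      and rel': "cong_rel m1 m2 l \<rho> i' u' v'"
      using signs' by (auto simp: uv)
    have unique: "i = i' \<and> v = v' \<and> (u \<noteq> u' \<longrightarrow> fst i = 0)"
      using cong_rel_node_unique[OF assms u v u' v' i i' rel rel'] .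
    have "u = u'"
    proof (rule ccontr)
      assume "u \<noteq> u'"
      with unique have "fst i = 0" by blast
      then have "[int l = (1-v)*int m1] (mod 4*int m1)"
        using rel by (simp add: cong_rel_iff[OF u v])
      then have "l mod (4*m1) = (if v = 1 then 0 else 2*m1)"
        by (rule first_coord_zero_mod[OF assms(1) v])
      moreover have "l mod (4*m1) = 0 \<Longrightarrow> u' = 1" "l mod (4*m1) = 2*m1 \<Longrightarrow> u' = -1"
        using signs' by (simp_all add: uv)
      ultimately show False using \<open>u \<noteq> u'\<close> sign by (cases "v = 1") simp_all
    qed
    with unique show "uv = (u, v)" by (simp add: uv)
  qed
qed

lemma paramD_bound_eq_lcm:
  fixes m1 m2 :: nat
  shows "int (4 * m1 * m2 div gcd m1 m2) = lcm (4 * int m1) (4 * int m2)"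
proof -
  have "gcd m1 m2 dvd m1 * m2" by (rule dvd_mult2) simp
  then have "4 * m1 * m2 div gcd m1 m2 = 4 * lcm m1 m2"
    by (metis div_mult_swap lcm_nat_def mult.assoc)
  also have "\<dots> = lcm (4 * m1) (4 * m2)" by (simp add: lcm_mult_left)
  finally show ?thesis by (metis lcm_int_int_eq of_nat_mult of_nat_numeral)
qed

lemma param_exists:
  fixes m1 m2 :: nat and a b :: int
  assumes "0 < m1" "0 < m2" and "even (a - b)"
  obtains l \<rho> where "(l, \<rho>) \<in> paramD m1 m2"
    "[int l = a] (mod 4*int m1)" "[int l - 2*int \<rho> = b] (mod 4*int m2)"
proof -
  define G where "G = int (gcd m1 m2)"
  have G: "0 < G" using assms(1) by (simp add: G_def)
  \<comment> \<open>\<open>\<rho>\<close> is chosen to make the two targets agree modulo \<open>gcd (4 m1) (4 m2) = 4 g\<close>.\<close>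
  define R where "R = ((a - b) div 2) mod (2*G)"
  have R: "0 \<le> R" "R < 2*G" using G by (simp_all add: R_def)
  have "a - b = 2 * ((a - b) div 2)" using assms(3) by simp
  then have "a - (b + 2*R) = 4*G * (((a - b) div 2) div (2*G))"
    using div_mult_mod_eq[of "(a - b) div 2" "2*G"] by (simp add: R_def algebra_simps)
  moreover have "gcd (4*int m1) (4*int m2) = 4*G" by (simp add: G_def gcd_mult_left)
  ultimately have "gcd (4*int m1) (4*int m2) dvd a - (b + 2*R)" by simp
  then obtain x where x: "[x = a] (mod 4*int m1)" "[x = b + 2*R] (mod 4*int m2)"
    by (rule cong_solvable_int)
  define L where "L = lcm (4*int m1) (4*int m2)"
  have L: "L = int (4 * m1 * m2 div gcd m1 m2)" by (simp add: L_def paramD_bound_eq_lcm)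
  have "0 < L" using assms(1,2) by (simp add: L_def lcm_pos_int)
  define l where "l = nat (x mod L)"
  have l: "int l = x mod L" "int l < L" using \<open>0 < L\<close> by (simp_all add: l_def)
  then have "[int l = x] (mod L)" by (simp add: cong_def)
  then have "[int l = x] (mod 4*int m1)" "[int l = x] (mod 4*int m2)"
    by (auto simp: L_def intro: cong_dvd_modulus)
  with x have "[int l = a] (mod 4*int m1)" and l2: "[int l = b + 2*R] (mod 4*int m2)"
    by (auto intro: cong_trans)
  moreover have "[int l - 2*R = b] (mod 4*int m2)"
    using cong_diff[OF l2 cong_refl, of "2*R"] by simp
  moreover have "(l, nat R) \<in> paramD m1 m2" using l R by (simp add: paramD_def L G_def)
  ultimately show ?thesis using R by (intro that) auto
qed

lemma param_unique:
  fixes m1 m2 l l' \<rho> \<rho>' :: nat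
  assumes "(l, \<rho>) \<in> paramD m1 m2" "(l', \<rho>') \<in> paramD m1 m2"
    and "[int l = int l'] (mod 4*int m1)"
    and "[int l - 2*int \<rho> = int l' - 2*int \<rho>'] (mod 4*int m2)"
  shows "l = l'" and "\<rho> = \<rho>'"
proof -
  define G where "G = int (gcd m1 m2)"
  have "4*G dvd 4*int m1" "4*G dvd 4*int m2" by (simp_all add: G_def)
  then have "4*G dvd (int l - int l') - ((int l - 2*int \<rho>) - (int l' - 2*int \<rho>'))"
    using assms(3,4) by (meson cong_iff_dvd_diff dvd_diff dvd_trans)
  then have "2*(2*G) dvd 2*(int \<rho> - int \<rho>')" by (simp add: algebra_simps)
  then have "2*G dvd int \<rho> - int \<rho>'" by (simp only: dvd_mult_cancel_left) simp
  then have "[int \<rho> = int \<rho>'] (mod 2*G)" by (simp add: cong_iff_dvd_diff)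
  moreover have "int \<rho> < 2*G" "int \<rho>' < 2*G" using assms(1,2) by (auto simp: paramD_def G_def)
  ultimately show "\<rho> = \<rho>'" using cong_less_imp_eq_int[of "int \<rho>" "2*G" "int \<rho>'"] by simp
  with assms(4) have "[int l = int l'] (mod 4*int m2)"
    by (simp add: cong_iff_dvd_diff)
  with assms(3) have "[int l = int l'] (mod lcm (4*int m1) (4*int m2))"
    by (rule cong_cong_lcm_int)
  then show "l = l'" using assms(1,2)
    by (auto simp: paramD_def paramD_bound_eq_lcm[symmetric] cong_int_iff
        dest: cong_less_modulus_unique_nat)
qed

(* Meaningful for nodes i and signs u, v in {-1, 1} only, where the description is unique. *)
definition param_of :: "nat \<Rightarrow> nat \<Rightarrow> int \<times> int \<Rightarrow> int \<Rightarrow> int \<Rightarrow> nat \<times> nat" where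
  "param_of m1 m2 i u v = (THE p. p \<in> paramD m1 m2 \<and> cong_rel m1 m2 (fst p) (snd p) i u v)"

lemma param_of_iff:
  assumes "0 < m1" "0 < m2" "i \<in> nodeI m1 m2" and u: "u \<in> {-1, 1}" and v: "v \<in> {-1, 1}"
  shows "p \<in> paramD m1 m2 \<and> cong_rel m1 m2 (fst p) (snd p) i u v \<longleftrightarrow> p = param_of m1 m2 i u v"
proof -
  let ?a = "u*v*fst i + (1-v)*int m1" and ?b = "snd i + (1-v)*int m2"
  have "even (fst i + snd i)" using assms(3) by (auto simp: nodeI_def)
  then have "even (?a - ?b)" using u v by auto
  then obtain l \<rho> where p: "(l, \<rho>) \<in> paramD m1 m2"
    "[int l = ?a] (mod 4*int m1)" "[int l - 2*int \<rho> = ?b] (mod 4*int m2)"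
    using param_exists[OF assms(1,2)] by blast
  have "\<exists>!p. p \<in> paramD m1 m2 \<and> cong_rel m1 m2 (fst p) (snd p) i u v"
  proof (rule ex1I[of _ "(l, \<rho>)"])
    show "(l, \<rho>) \<in> paramD m1 m2 \<and> cong_rel m1 m2 (fst (l, \<rho>)) (snd (l, \<rho>)) i u v"
      using p by (simp add: cong_rel_iff[OF u v])
  next
    fix p' assume p': "p' \<in> paramD m1 m2 \<and> cong_rel m1 m2 (fst p') (snd p') i u v"
    obtain l' \<rho>' where l': "p' = (l', \<rho>')" by fastforce
    have "[int l' = ?a] (mod 4*int m1)" "[int l' - 2*int \<rho>' = ?b] (mod 4*int m2)"
      using p' by (simp_all add: l' cong_rel_iff[OF u v])
    then have "[int l' = int l] (mod 4*int m1)" "[int l' - 2*int \<rho>' = int l - 2*int \<rho>] (mod 4*int m2)"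
      using p(2,3) by (meson cong_sym cong_trans)+
    with p(1) p' show "p' = (l, \<rho>)" using param_unique[of l' \<rho>' m1 m2 l \<rho>] by (simp add: l')
  qed
  from the1_equality[OF this] theI'[OF this] show ?thesis unfolding param_of_def by blast
qed

lemma ex_param_attached:
  assumes "0 < m1" "0 < m2" "i \<in> nodeI m1 m2"
  shows "\<exists>(l, \<rho>)\<in>paramD m1 m2. attached m1 m2 l \<rho> i"
proof -
  let ?p = "param_of m1 m2 i 1 1"
  have "(1::int) \<in> {-1, 1}" by simp
  from param_of_iff[OF assms this this, of ?p]
  have "?p \<in> paramD m1 m2" "cong_rel m1 m2 (fst ?p) (snd ?p) i 1 1" by simp_all
  then show ?thesis unfolding attached_def by (intro bexI[of _ ?p]) (auto simp: case_prod_beta)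
qed

lemma attached_params_eq_image:
  assumes "0 < m1" "0 < m2" "i \<in> nodeI m1 m2"
  shows "{p \<in> paramD m1 m2. attached m1 m2 (fst p) (snd p) i}
    = (\<lambda>(u, v). param_of m1 m2 i u v) ` ({-1, 1} \<times> {-1, 1})"
proof (intro equalityI subsetI)
  fix p assume "p \<in> {p \<in> paramD m1 m2. attached m1 m2 (fst p) (snd p) i}"
  then obtain u v where uv: "u \<in> {-1, 1}" "v \<in> {-1, 1}"
    and "p \<in> paramD m1 m2 \<and> cong_rel m1 m2 (fst p) (snd p) i u v"
    by (auto simp: attached_def)
  then have "p = param_of m1 m2 i u v" using param_of_iff[OF assms uv] by blast
  with uv show "p \<in> (\<lambda>(u, v). param_of m1 m2 i u v) ` ({-1, 1} \<times> {-1, 1})" by auto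
next
  fix p assume "p \<in> (\<lambda>(u, v). param_of m1 m2 i u v) ` ({-1, 1} \<times> {-1, 1})"
  then obtain u v where uv: "u \<in> {-1, 1}" "v \<in> {-1, 1}" and "p = param_of m1 m2 i u v"
    by auto
  then have "p \<in> paramD m1 m2 \<and> cong_rel m1 m2 (fst p) (snd p) i u v"
    using param_of_iff[OF assms uv] by blast
  with uv show "p \<in> {p \<in> paramD m1 m2. attached m1 m2 (fst p) (snd p) i}"
    by (auto simp: attached_def)
qed

lemma param_of_eqD:
  assumes "0 < m1" "0 < m2" "i \<in> nodeI m1 m2"
    and u: "u \<in> {-1, 1}" and v: "v \<in> {-1, 1}" and u': "u' \<in> {-1, 1}" and v': "v' \<in> {-1, 1}"
    and "param_of m1 m2 i u v = param_of m1 m2 i u' v'"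
  shows "v = v' \<and> (u \<noteq> u' \<longrightarrow> fst i = 0)"
proof -
  let ?p = "param_of m1 m2 i u v"
  have "cong_rel m1 m2 (fst ?p) (snd ?p) i u v" "cong_rel m1 m2 (fst ?p) (snd ?p) i u' v'"
    using param_of_iff[OF assms(1-3) u v, of ?p] param_of_iff[OF assms(1-3) u' v', of ?p] assms(8)
    by simp_all
  from cong_rel_node_unique[OF assms(1,2) u v u' v' assms(3,3) this] show ?thesis by simp
qed

lemma param_of_first_zero:
  assumes "fst i = 0" "u \<in> {-1, 1}" "v \<in> {-1, 1}"
  shows "param_of m1 m2 i u v = param_of m1 m2 i 1 v"
proof -
  have "cong_rel m1 m2 l \<rho> i u v \<longleftrightarrow> cong_rel m1 m2 l \<rho> i 1 v" for l \<rho>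
    using cong_rel_iff[OF assms(2,3)] cong_rel_iff[of 1 v] assms(1,3) by simp
  then show ?thesis unfolding param_of_def by presburger
qed

lemma card_attached_params:
  assumes "0 < m1" "0 < m2" and i: "i \<in> nodeI m1 m2"
  shows "card {p \<in> paramD m1 m2. attached m1 m2 (fst p) (snd p) i} = (if fst i = 0 then 2 else 4)"
proof (cases "fst i = 0")
  case True
  have "(\<lambda>(u, v). param_of m1 m2 i u v) ` ({-1, 1} \<times> {-1, 1})
      = (\<lambda>(u :: int, v). param_of m1 m2 i 1 v) ` ({-1, 1} \<times> {-1, 1})"
    by (rule image_cong[OF refl]) (auto simp: param_of_first_zero[OF True, of "-1"])
  also have "\<dots> = param_of m1 m2 i 1 ` {-1, 1}"
    by force
  finally have image: "(\<lambda>(u, v). param_of m1 m2 i u v) ` ({-1, 1} \<times> {-1, 1}) = param_of m1 m2 i 1 ` {-1, 1}" .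
  have "inj_on (param_of m1 m2 i 1) {-1, 1}"
  proof (rule inj_onI)
    fix v v' :: int
    assume "v \<in> {-1, 1}" "v' \<in> {-1, 1}" "param_of m1 m2 i 1 v = param_of m1 m2 i 1 v'"
    then show "v = v'" using param_of_eqD[OF assms, of 1 v 1 v'] by simp
  qed
  then show ?thesis using True image by (simp add: attached_params_eq_image[OF assms] card_image)
next
  case False
  have "inj_on (\<lambda>(u, v). param_of m1 m2 i u v) ({-1, 1} \<times> {-1, 1})"
  proof (rule inj_onI, clarify)
    fix u v u' v' :: int
    assume "u \<in> {-1, 1}" "v \<in> {-1, 1}" "u' \<in> {-1, 1}" "v' \<in> {-1, 1}"
      "param_of m1 m2 i u v = param_of m1 m2 i u' v'"
    from param_of_eqD[OF assms this] False show "u = u' \<and> v = v'" by blast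
  qed
  then show ?thesis using False by (simp add: attached_params_eq_image[OF assms] card_image)
qed

theorem proposition9p1:
  fixes m1 m2 :: nat
  assumes "0 < m1" and "0 < m2"
  shows
    "(\<forall>(l, \<rho>)\<in>paramD m1 m2. \<exists>i\<in>nodeI m1 m2. attached m1 m2 l \<rho> i)
   \<and> (\<forall>(l, \<rho>)\<in>paramD m1 m2. \<forall>i\<in>nodeI m1 m2. \<forall>i'\<in>nodeI m1 m2.
        attached m1 m2 l \<rho> i \<and> attached m1 m2 l \<rho> i' \<longrightarrow> i = i')
   \<and> (\<forall>i\<in>nodeI m1 m2. \<exists>(l, \<rho>)\<in>paramD m1 m2. attached m1 m2 l \<rho> i)
   \<and> (\<forall>(l, \<rho>)\<in>paramD m1 m2. \<forall>i\<in>nodeI m1 m2. attached m1 m2 l \<rho> i \<longrightarrow>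
        ((i \<in> nodeI0 m1 m2 \<longleftrightarrow> even l) \<and> (i \<in> nodeI1 m1 m2 \<longleftrightarrow> odd l)))
   \<and> (\<forall>(l, \<rho>)\<in>paramD m1 m2. \<exists>!uv :: int \<times> int.
        fst uv \<in> {-1, 1} \<and> snd uv \<in> {-1, 1}
        \<and> (l mod (4 * m1) = 0 \<longrightarrow> fst uv = 1)
        \<and> (l mod (4 * m1) = 2 * m1 \<longrightarrow> fst uv = -1)
        \<and> (\<exists>i\<in>nodeI m1 m2. cong_rel m1 m2 l \<rho> i (fst uv) (snd uv)))
   \<and> (\<forall>i\<in>nodeI m1 m2.
        (0 < fst i \<and> fst i \<le> int m1 \<longrightarrow>
           card {p \<in> paramD m1 m2. attached m1 m2 (fst p) (snd p) i} = 4)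
      \<and> (fst i = 0 \<longrightarrow>
           card {p \<in> paramD m1 m2. attached m1 m2 (fst p) (snd p) i} = 2))"
  using ex_attached_node[OF assms] attached_node_unique[OF assms] ex_param_attached[OF assms]
    attached_node_parity ex1_signs[OF assms] card_attached_params[OF assms]
  by auto

end
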